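(* Let $g:\mathbb{R}\to\mathbb{R}$ and suppose that $g$ is not a polynomial on some open interval $I\subset\mathbb{R}$, and that there exists a point of $I$ at which $g$ is infinitely many times differentiable. Let ${\bf x}_1,\ldots,{\bf x}_N$ be distinct points in $\mathbb{R}^d$ (with $N\gg d$), and let $X$ be the $N\times d$ matrix whose $i$-th row is ${\bf x}_i$. Then for any integer $m$ with $d<m\le N$ there exist a $d\times m$ real matrix $W$ and an $m$-dimensional real row vector $b$ such that the $N\times m$ matrix $g(XW+\mathbb{1}b)$ has rank $m$. The same statement holds if $g(t)=\max\{t,0\}$. On the other hand, if $g$ is a polynomial of degree $p$, then for every $d\times m$ matrix $W$ (any $m$) and every $m$-dimensional row vector $b$, the rank of $g(XW+\mathbb{1}b)$ is at most $\binom{p+d}{p}$.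
   Context: $\mathbb{1}$ denotes the $N$-dimensional column vector all of whose entries equal $1$, so $XW+\mathbb{1}b$ is the $N\times m$ matrix whose $(i,j)$ entry is ${\bf x}_i\cdot W_{\cdot j}+b_j$. For a matrix $U$, $g(U)$ denotes the matrix obtained by applying $g$ to every entry of $U$. *)

theory Defs
  imports Complex_Main "Jordan_Normal_Form.DL_Rank" "HOL-Computational_Algebra.Polynomial"
begin

definition pre_act :: "real mat \<Rightarrow> real mat \<Rightarrow> real vec \<Rightarrow> real mat" where
  "pre_act X W b = X * W + mat (dim_row X) (dim_col W) (\<lambda>(i, j). b $ j)"

definition layer :: "(real \<Rightarrow> real) \<Rightarrow> real mat \<Rightarrow> real mat \<Rightarrow> real vec \<Rightarrow> real mat" where
  "layer g X W b = map_mat g (pre_act X W b)"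

definition relu :: "real \<Rightarrow> real" where
  "relu t = max t 0"

definition open_interval :: "real set \<Rightarrow> bool" where
  "open_interval I \<longleftrightarrow> open I \<and> I \<noteq> {} \<and>
     (\<forall>x\<in>I. \<forall>y\<in>I. \<forall>z. x \<le> z \<and> z \<le> y \<longrightarrow> z \<in> I)"

definition polynomial_on :: "(real \<Rightarrow> real) \<Rightarrow> real set \<Rightarrow> bool" where
  "polynomial_on g I \<longleftrightarrow> (\<exists>q :: real poly. \<forall>x\<in>I. g x = poly q x)"

(* g is infinitely many times differentiable at x0: for every n the n-th derivative
   g^(n)(x0) exists, i.e. for every n there are functions D 0 = g, D 1, ..., D n with
   D (k+1) the derivative of D k on a neighbourhood of x0 for all k < n *)
definition smooth_at :: "(real \<Rightarrow> real) \<Rightarrow> real \<Rightarrow> bool" where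
  "smooth_at g x0 \<longleftrightarrow> (\<forall>n. \<exists>e>0. \<exists>D :: nat \<Rightarrow> real \<Rightarrow> real.
      (\<forall>x. \<bar>x - x0\<bar> < e \<longrightarrow> D 0 x = g x) \<and>
      (\<forall>k<n. \<forall>x. \<bar>x - x0\<bar> < e \<longrightarrow> (D k has_real_derivative D (Suc k) x) (at x)))"

end

theory Submission
  imports Defs
begin

(* Choose s such that the numbers t_i = sum_k x_ik s^k are distinct. Taking the j-th column of W
   to be a_j (1, s, ..., s^(d-1)) makes the (i,j) entry of g(XW + 1b) equal to g(a_j t_i + b_j),
   so it suffices that the vectors (g(a t_i + b))_i, for (a, b) in R^2, span R^N: then m <= N of
   them are linearly independent.
   Suppose instead that sum_i c_i g(a t_i + b) = 0 for all a, b with c nonzero. Differentiating k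
   times in a at a = 0 gives (sum_i c_i t_i^k) g^(k)(b) = 0 near the point x0 where g is smooth,
   and some such power sum is nonzero because the t_i are distinct; so g agrees with a polynomial q
   near x0. The polynomial identity for q extends to all (a, b), hence h = g - q is annihilated
   as well and vanishes near x0. For the largest t_j with c_j nonzero, the identity expresses
   h(y) by values of h to the left of y (and, reflecting, to the right), so h vanishes everywhere
   and g is a polynomial.
   For g a polynomial of degree p every column of g(XW + 1b) is a combination of the monomials of
   degree at most p in the entries of the rows x_i; there are (p + d choose p) of them. *)

section \<open>Polynomials and smoothness\<close>

lemma poly_eq_0_if_vanishes_on_interval:
  fixes p :: "real poly"
  assumes "l < u" and "\<And>x. l < x \<Longrightarrow> x < u \<Longrightarrow> poly p x = 0"
  shows "p = 0"
proof (rule ccontr)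
  assume "p \<noteq> 0"
  then have "finite {x. poly p x = 0}" by (rule poly_roots_finite)
  moreover have "{l<..<u} \<subseteq> {x. poly p x = 0}" using assms(2) by auto
  ultimately show False using infinite_Ioo[OF assms(1)] finite_subset by blast
qed

lemma pderiv_surj:
  fixes p :: "'a::field_char_0 poly"
  shows "\<exists>P. pderiv P = p"
proof -
  let ?P = "\<Sum>i\<le>degree p. monom (coeff p i / of_nat (Suc i)) (Suc i)"
  have "pderiv ?P = (\<Sum>i\<le>degree p. pderiv (monom (coeff p i / of_nat (Suc i)) (Suc i)))"
    using higher_pderiv_sum[of 1] by simp
  also have "\<dots> = (\<Sum>i\<le>degree p. monom (coeff p i) i)"
    by (intro sum.cong refl) (simp add: pderiv_monom del: of_nat_Suc)
  also have "\<dots> = p" by (rule poly_as_sum_of_monoms)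
  finally show ?thesis by blast
qed

lemma poly_on_interval_if_deriv_poly:
  fixes f :: "real \<Rightarrow> real"
  assumes "\<And>x. l < x \<Longrightarrow> x < u \<Longrightarrow> (f has_real_derivative poly q x) (at x)"
  shows "\<exists>P. \<forall>x. l < x \<and> x < u \<longrightarrow> f x = poly P x"
proof (cases "l < u")
  case True
  obtain P where P: "pderiv P = q" using pderiv_surj by blast
  have "((\<lambda>x. f x - poly P x) has_real_derivative 0) (at x)" if "l < x" "x < u" for x
    using DERIV_diff[OF assms[OF that] poly_DERIV[of P x]] by (simp add: P)
  then have "f x - poly P x = f ((l + u) / 2) - poly P ((l + u) / 2)" if "l < x" "x < u" for x
    using True that by (intro DERIV_isconst3[of l u]) auto
  then show ?thesis
    by (intro exI[of _ "P + [:f ((l + u) / 2) - poly P ((l + u) / 2):]"]) (auto simp: algebra_simps)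
qed simp

lemma poly_on_interval_if_higher_deriv_vanishes:
  fixes D :: "nat \<Rightarrow> real \<Rightarrow> real"
  assumes "\<And>k x. k < n \<Longrightarrow> l < x \<Longrightarrow> x < u \<Longrightarrow> (D k has_real_derivative D (Suc k) x) (at x)"
    and "\<And>x. l < x \<Longrightarrow> x < u \<Longrightarrow> D n x = 0"
  shows "\<exists>q. \<forall>x. l < x \<and> x < u \<longrightarrow> D 0 x = poly q x"
  using assms
proof (induction n arbitrary: D)
  case 0
  then show ?case by (intro exI[of _ 0]) auto
next
  case (Suc n)
  obtain q where q: "\<forall>x. l < x \<and> x < u \<longrightarrow> D 1 x = poly q x"
    using Suc.IH[of "\<lambda>k. D (Suc k)"] Suc.prems by auto
  have "(D 0 has_real_derivative poly q x) (at x)" if "l < x" "x < u" for x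
    using Suc.prems(1)[of 0 x] q that by auto
  then show ?case by (rule poly_on_interval_if_deriv_poly)
qed

lemma power_sum_nonzero:
  fixes t c :: "nat \<Rightarrow> 'a::idom"
  assumes inj: "inj_on t {..<N}" and j: "j < N" "c j \<noteq> 0"
  shows "\<exists>k. (\<Sum>i<N. c i * t i ^ k) \<noteq> 0"
proof (rule ccontr)
  assume "\<not> ?thesis"
  then have power_sums: "(\<Sum>i<N. c i * t i ^ k) = 0" for k by simp
  define L where "L = (\<Prod>i\<in>{..<N}-{j}. [:- t i, 1:])"
  have poly_L: "poly L x = (\<Prod>i\<in>{..<N}-{j}. x - t i)" for x by (simp add: L_def poly_prod)
  have "0 = (\<Sum>r\<le>degree L. coeff L r * (\<Sum>i<N. c i * t i ^ r))" by (simp add: power_sums)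
  also have "\<dots> = (\<Sum>i<N. c i * poly L (t i))"
    by (simp add: poly_altdef sum_distrib_left mult_ac sum.swap[of _ "{..<N}"])
  also have "\<dots> = c j * poly L (t j) + (\<Sum>i\<in>{..<N}-{j}. c i * poly L (t i))"
    using sum.remove[of "{..<N}" j "\<lambda>i. c i * poly L (t i)"] j by simp
  also have "(\<Sum>i\<in>{..<N}-{j}. c i * poly L (t i)) = 0"
    by (intro sum.neutral) (auto simp: poly_L prod_zero_iff)
  finally have "c j * poly L (t j) = 0" by simp
  moreover have "poly L (t j) \<noteq> 0"
    using inj j by (auto simp: poly_L inj_on_def)
  ultimately show False using j by simp
qed

lemma smooth_atE:
  assumes "smooth_at g z"
  obtains e D where "e > 0" and "\<And>x. \<bar>x - z\<bar> < e \<Longrightarrow> D 0 x = g x"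
    and "\<And>k x. k < n \<Longrightarrow> \<bar>x - z\<bar> < e \<Longrightarrow> (D k has_real_derivative D (Suc k) x) (at x)"
proof -
  have "\<exists>e>0. \<exists>D. (\<forall>x. \<bar>x - z\<bar> < e \<longrightarrow> D 0 x = g x) \<and>
      (\<forall>k<n. \<forall>x. \<bar>x - z\<bar> < e \<longrightarrow> (D k has_real_derivative D (Suc k) x) (at x))"
    using assms unfolding smooth_at_def by (rule spec)
  then obtain e D where "e > 0" "\<forall>x. \<bar>x - z\<bar> < e \<longrightarrow> D 0 x = g x"
    "\<forall>k<n. \<forall>x. \<bar>x - z\<bar> < e \<longrightarrow> (D k has_real_derivative D (Suc k) x) (at x)"
    by blast
  then show thesis by (intro that[of e D]) simp_all
qed

lemma smooth_at_if_poly_near: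
  assumes "e > 0" and "\<And>x. \<bar>x - z\<bar> < e \<Longrightarrow> g x = poly q x"
  shows "smooth_at g z"
  unfolding smooth_at_def
  by (intro allI exI[of _ e] conjI exI[of _ "\<lambda>k. poly ((pderiv ^^ k) q)"]) (auto simp: assms)

section \<open>Annihilated ridge sums\<close>

lemma open_slopes_near:
  fixes t :: "nat \<Rightarrow> real"
  shows "open {a. \<forall>i<N. \<bar>a * t i + b - z\<bar> < e}"
proof -
  have "{a. \<forall>i<N. \<bar>a * t i + b - z\<bar> < e} = (\<Inter>i<N. {a. \<bar>a * t i + b - z\<bar> < e})"
    by auto
  then show ?thesis by (auto intro!: open_INT open_Collect_less continuous_intros)
qed

lemma DERIV_eq_0_if_vanishes_on_open:
  fixes f :: "real \<Rightarrow> real"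
  assumes "(f has_real_derivative f') (at a)" "open S" "a \<in> S" "\<And>x. x \<in> S \<Longrightarrow> f x = 0"
  shows "f' = 0"
proof -
  have "((\<lambda>_. 0) has_real_derivative f') (at a)"
    using has_field_derivative_transform_within_open[OF assms(1-3)] assms(4) by auto
  then show ?thesis using DERIV_const DERIV_unique by blast
qed

lemma ridge_sum_higher_deriv_vanishes:
  fixes g :: "real \<Rightarrow> real" and t c :: "nat \<Rightarrow> real"
  assumes D0: "\<And>x. \<bar>x - z\<bar> < e \<Longrightarrow> D 0 x = g x"
    and D: "\<And>k x. k < n \<Longrightarrow> \<bar>x - z\<bar> < e \<Longrightarrow> (D k has_real_derivative D (Suc k) x) (at x)"
    and annihilated: "\<And>a b. (\<Sum>i<N. c i * g (a * t i + b)) = 0"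
    and "k \<le> n" and near: "\<forall>i<N. \<bar>a * t i + b - z\<bar> < e"
  shows "(\<Sum>i<N. c i * t i ^ k * D k (a * t i + b)) = 0"
  using \<open>k \<le> n\<close> near
proof (induction k arbitrary: a)
  case 0
  have "(\<Sum>i<N. c i * t i ^ 0 * D 0 (a * t i + b)) = (\<Sum>i<N. c i * g (a * t i + b))"
    using 0 D0 by (intro sum.cong) auto
  then show ?case using annihilated by simp
next
  case (Suc k)
  let ?U = "{a. \<forall>i<N. \<bar>a * t i + b - z\<bar> < e}"
  have "((\<lambda>a. \<Sum>i<N. c i * t i ^ k * D k (a * t i + b)) has_real_derivative
      (\<Sum>i<N. c i * t i ^ k * (D (Suc k) (a * t i + b) * t i))) (at a)"
  proof (intro DERIV_sum DERIV_cmult)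
    fix i assume "i \<in> {..<N}"
    then have "(D k has_real_derivative D (Suc k) (a * t i + b)) (at (a * t i + b))"
      using D Suc.prems by auto
    moreover have "((\<lambda>a. a * t i + b) has_real_derivative t i) (at a)"
      by (auto intro!: derivative_eq_intros)
    ultimately show "((\<lambda>a. D k (a * t i + b)) has_real_derivative D (Suc k) (a * t i + b) * t i) (at a)"
      by (rule DERIV_chain2)
  qed
  moreover have "open ?U" by (rule open_slopes_near)
  moreover have "a \<in> ?U" using Suc.prems(2) by simp
  moreover have "(\<Sum>i<N. c i * t i ^ k * D k (a' * t i + b)) = 0" if "a' \<in> ?U" for a'
    using Suc.IH[of a'] Suc.prems(1) that by simp
  ultimately have "(\<Sum>i<N. c i * t i ^ k * (D (Suc k) (a * t i + b) * t i)) = 0"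
    by (rule DERIV_eq_0_if_vanishes_on_open)
  then show ?case by (simp add: algebra_simps)
qed

lemma ridge_sum_poly_vanishes:
  fixes g :: "real \<Rightarrow> real" and t c :: "nat \<Rightarrow> real"
  assumes "e > 0" and g: "\<And>x. \<bar>x - z\<bar> < e \<Longrightarrow> g x = poly q x"
    and annihilated: "\<And>a b. (\<Sum>i<N. c i * g (a * t i + b)) = 0"
  shows "(\<Sum>i<N. c i * poly q (a * t i + b)) = 0"
proof -
  define Q where "Q b = (\<Sum>i<N. Polynomial.smult (c i) (q \<circ>\<^sub>p [:b, t i:]))" for b
  have poly_Q: "poly (Q b) a = (\<Sum>i<N. c i * poly q (a * t i + b))" for a b
    by (simp add: Q_def poly_sum poly_pcompose algebra_simps)
  have Q: "Q b = 0" if b: "\<bar>b - z\<bar> < e" for b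
  proof -
    let ?U = "{a. \<forall>i<N. \<bar>a * t i + b - z\<bar> < e}"
    have "open ?U" "0 \<in> ?U" using b by (auto intro: open_slopes_near)
    then obtain r where "r > 0" and r: "\<forall>a. dist a 0 < r \<longrightarrow> a \<in> ?U"
      unfolding open_dist by blast
    have "poly (Q b) a = 0" if "- r < a" "a < r" for a
    proof -
      have "a \<in> ?U" using r that by (auto simp: dist_real_def)
      then show ?thesis using annihilated[of a b] g by (simp add: poly_Q)
    qed
    then show "Q b = 0" using \<open>r > 0\<close> by (intro poly_eq_0_if_vanishes_on_interval[of "- r" r]) auto
  qed
  define R where "R = (\<Sum>i<N. Polynomial.smult (c i) (q \<circ>\<^sub>p [:a * t i, 1:]))"
  have poly_R: "poly R b = (\<Sum>i<N. c i * poly q (a * t i + b))" for b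
    by (simp add: R_def poly_sum poly_pcompose)
  have "R = 0"
  proof (rule poly_eq_0_if_vanishes_on_interval[of "z - e" "z + e"])
    fix b assume "z - e < b" "b < z + e"
    then have "Q b = 0" by (intro Q) auto
    then show "poly R b = 0" using poly_Q[of b a] by (simp add: poly_R)
  qed (use \<open>e > 0\<close> in simp)
  then show ?thesis using poly_R[of b] by simp
qed

lemma vanishes_right_if_determined_by_left:
  fixes h :: "real \<Rightarrow> real" and D :: "real set"
  assumes "\<delta> > 0" and D: "D \<subseteq> {\<delta>..e}"
    and determined: "\<And>y. (\<And>s. s \<in> D \<Longrightarrow> h (y - s) = 0) \<Longrightarrow> h y = 0"
    and zero: "\<And>x. \<bar>x - z\<bar> < e \<Longrightarrow> h x = 0"
    and "z - e < y"
  shows "h y = 0"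
proof -
  have vanishes: "\<forall>y. z - e < y \<and> y < z + e + real n * \<delta> \<longrightarrow> h y = 0" for n
  proof (induction n)
    case 0
    then show ?case using zero by (auto simp: abs_less_iff)
  next
    case (Suc n)
    show ?case
    proof (intro allI impI)
      fix y assume y: "z - e < y \<and> y < z + e + real (Suc n) * \<delta>"
      show "h y = 0"
      proof (cases "y < z + e + real n * \<delta>")
        case True
        then show ?thesis using Suc.IH y by blast
      next
        case False
        show ?thesis
        proof (rule determined)
          fix s assume "s \<in> D"
          then have "\<delta> \<le> s" "s \<le> e" using D by auto
          moreover have "real n * \<delta> \<ge> 0" "real (Suc n) * \<delta> = real n * \<delta> + \<delta>"
            using \<open>\<delta> > 0\<close> by (simp_all add: algebra_simps)
          ultimately have "z - e < y - s \<and> y - s < z + e + real n * \<delta>"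
            using y False \<open>\<delta> > 0\<close> by linarith
          then show "h (y - s) = 0" using Suc.IH by blast
        qed
      qed
    qed
  qed
  obtain n where "y - z - e < real n * \<delta>"
    using reals_Archimedean3[OF \<open>\<delta> > 0\<close>] by blast
  then show ?thesis using vanishes[of n] \<open>z - e < y\<close> by auto
qed

lemma finite_positive_scaled_into_Icc:
  fixes F :: "real set"
  assumes "finite F" and "\<forall>x\<in>F. x > 0" and "e > 0"
  obtains a \<delta> where "a > 0" and "\<delta> > 0" and "(\<lambda>x. a * x) ` F \<subseteq> {\<delta>..e}"
proof (cases "F = {}")
  case True
  then show ?thesis using that[of 1 1] by simp
next
  case False
  define a where "a = e / Max F"
  have "Min F > 0" "Max F > 0" using assms False by auto
  then have "a > 0" using \<open>e > 0\<close> by (simp add: a_def)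
  have "a * Min F \<le> a * x \<and> a * x \<le> e" if "x \<in> F" for x
  proof -
    have "a * Min F \<le> a * x" "a * x \<le> a * Max F"
      using \<open>a > 0\<close> that assms(1) by simp_all
    moreover have "a * Max F = e" using \<open>Max F > 0\<close> by (simp add: a_def)
    ultimately show ?thesis by simp
  qed
  then have "(\<lambda>x. a * x) ` F \<subseteq> {a * Min F..e}" by auto
  moreover have "a * Min F > 0" using \<open>a > 0\<close> \<open>Min F > 0\<close> by simp
  ultimately show ?thesis using that \<open>a > 0\<close> by blast
qed

lemma ridge_annihilated_vanishes_right:
  fixes h :: "real \<Rightarrow> real" and t c :: "nat \<Rightarrow> real"
  assumes inj: "inj_on t {..<N}" and nonzero: "\<exists>i<N. c i \<noteq> 0"
    and annihilated: "\<And>a b. (\<Sum>i<N. c i * h (a * t i + b)) = 0"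
    and "e > 0" and zero: "\<And>x. \<bar>x - z\<bar> < e \<Longrightarrow> h x = 0"
    and "z - e < y"
  shows "h y = 0"
proof -
  define S where "S = {i. i < N \<and> c i \<noteq> 0}"
  have "finite S" "S \<noteq> {}" using nonzero by (auto simp: S_def)
  then obtain j where "j \<in> S" and j_max: "t j = Max (t ` S)"
    by (metis (no_types, lifting) Max_in finite_imageI image_iff image_is_empty)
  have gaps_pos: "\<forall>i\<in>S-{j}. t j - t i > 0"
  proof
    fix i assume i: "i \<in> S-{j}"
    then have "t i \<noteq> t j" using inj \<open>j \<in> S\<close> by (auto simp: S_def inj_on_def)
    moreover have "t i \<le> t j" using i j_max \<open>finite S\<close> by simp
    ultimately show "t j - t i > 0" by simp
  qed
  obtain a \<delta> where "a > 0" "\<delta> > 0"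
    and gaps: "(\<lambda>x. a * x) ` (\<lambda>i. t j - t i) ` (S-{j}) \<subseteq> {\<delta>..e}"
    using finite_positive_scaled_into_Icc[of "(\<lambda>i. t j - t i) ` (S-{j})" e]
      \<open>finite S\<close> gaps_pos \<open>e > 0\<close> by auto
  show ?thesis
  proof (rule vanishes_right_if_determined_by_left[where h = h and z = z and y = y, OF \<open>\<delta> > 0\<close> gaps])
    fix x assume left: "\<And>s. s \<in> (\<lambda>x. a * x) ` (\<lambda>i. t j - t i) ` (S-{j}) \<Longrightarrow> h (x - s) = 0"
    have "0 = (\<Sum>i<N. c i * h (a * t i + (x - a * t j)))" by (rule annihilated[symmetric])
    also have "\<dots> = (\<Sum>i<N. c i * h (x - a * (t j - t i)))"
      by (simp add: algebra_simps)
    also have "\<dots> = (\<Sum>i\<in>S. c i * h (x - a * (t j - t i)))"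
      by (rule sum.mono_neutral_right) (auto simp: S_def)
    also have "\<dots> = c j * h x + (\<Sum>i\<in>S-{j}. c i * h (x - a * (t j - t i)))"
      using sum.remove[OF \<open>finite S\<close> \<open>j \<in> S\<close>, of "\<lambda>i. c i * h (x - a * (t j - t i))"] by simp
    also have "(\<Sum>i\<in>S-{j}. c i * h (x - a * (t j - t i))) = 0"
      using left by (intro sum.neutral) auto
    finally show "h x = 0" using \<open>j \<in> S\<close> by (simp add: S_def)
  qed (use zero \<open>z - e < y\<close> in auto)
qed

lemma ridge_annihilated_vanishes:
  fixes h :: "real \<Rightarrow> real" and t c :: "nat \<Rightarrow> real"
  assumes inj: "inj_on t {..<N}" and nonzero: "\<exists>i<N. c i \<noteq> 0"
    and annihilated: "\<And>a b. (\<Sum>i<N. c i * h (a * t i + b)) = 0"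
    and "e > 0" and zero: "\<And>x. \<bar>x - z\<bar> < e \<Longrightarrow> h x = 0"
  shows "h y = 0"
proof (cases "z - e < y")
  case True
  then show ?thesis using ridge_annihilated_vanishes_right[OF assms] by blast
next
  case False
  have "inj_on (\<lambda>i. - t i) {..<N}" using inj by (auto simp: inj_on_def)
  moreover have "(\<Sum>i<N. c i * h (- (a * - t i + b))) = 0" for a b
    using annihilated[of a "- b"] by simp
  moreover have "h (- x) = 0" if "\<bar>x - - z\<bar> < e" for x
    using zero[of "- x"] that by (simp add: abs_minus_commute)
  moreover have "- z - e < - y" using False \<open>e > 0\<close> by simp
  ultimately show ?thesis
    using ridge_annihilated_vanishes_right[of "\<lambda>i. - t i" N c "\<lambda>x. h (- x)" e "- z" "- y"]
      nonzero \<open>e > 0\<close> by simp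
qed

lemma poly_if_ridge_annihilated:
  fixes g :: "real \<Rightarrow> real" and t c :: "nat \<Rightarrow> real"
  assumes "smooth_at g z" and inj: "inj_on t {..<N}" and nonzero: "\<exists>i<N. c i \<noteq> 0"
    and annihilated: "\<And>a b. (\<Sum>i<N. c i * g (a * t i + b)) = 0"
  shows "\<exists>q. g = poly q"
proof -
  obtain k where k: "(\<Sum>i<N. c i * t i ^ k) \<noteq> 0"
    using power_sum_nonzero[OF inj] nonzero by blast
  obtain e D where "e > 0" and D0: "\<And>x. \<bar>x - z\<bar> < e \<Longrightarrow> D 0 x = g x"
    and D: "\<And>j x. j < k \<Longrightarrow> \<bar>x - z\<bar> < e \<Longrightarrow> (D j has_real_derivative D (Suc j) x) (at x)"
    using smooth_atE[OF \<open>smooth_at g z\<close>, where n = k] by blast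
  have Dk: "D k x = 0" if "\<bar>x - z\<bar> < e" for x
  proof -
    have "(\<Sum>i<N. c i * t i ^ k * D k (0 * t i + x)) = 0"
      by (rule ridge_sum_higher_deriv_vanishes[where D = D and g = g and z = z and e = e and n = k,
            OF D0 D annihilated order.refl]) (use that in auto)
    then have "(\<Sum>i<N. c i * t i ^ k) * D k x = 0" by (simp add: sum_distrib_right)
    then show ?thesis using k by simp
  qed
  have "\<exists>q. \<forall>x. z - e < x \<and> x < z + e \<longrightarrow> D 0 x = poly q x"
  proof (rule poly_on_interval_if_higher_deriv_vanishes)
    fix j x assume "j < k" "z - e < x" "x < z + e"
    then show "(D j has_real_derivative D (Suc j) x) (at x)" by (simp add: D abs_less_iff)
  next
    fix x assume "z - e < x" "x < z + e"
    then show "D k x = 0" by (simp add: Dk abs_less_iff)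
  qed
  then obtain q where q_near: "\<forall>x. z - e < x \<and> x < z + e \<longrightarrow> D 0 x = poly q x" by blast
  have q: "g x = poly q x" if "\<bar>x - z\<bar> < e" for x
    using D0[OF that] q_near that by (simp add: abs_less_iff)
  have "(\<Sum>i<N. c i * poly q (a * t i + b)) = 0" for a b
    using \<open>e > 0\<close> q annihilated by (rule ridge_sum_poly_vanishes)
  then have diff_annihilated: "(\<Sum>i<N. c i * (g (a * t i + b) - poly q (a * t i + b))) = 0" for a b
    using annihilated[of a b] by (simp add: right_diff_distrib sum_subtractf)
  have "g y - poly q y = 0" for y
    by (rule ridge_annihilated_vanishes[where h = "\<lambda>x. g x - poly q x" and z = z,
          OF inj nonzero diff_annihilated \<open>e > 0\<close>]) (simp add: q)
  then show ?thesis by auto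
qed

section \<open>Selecting linearly independent columns\<close>

lemma exists_nonzero_annihilator:
  fixes F :: "nat \<Rightarrow> nat \<Rightarrow> 'a::field"
  assumes "k < N"
  shows "\<exists>c. (\<exists>i<N. c i \<noteq> 0) \<and> (\<forall>j<k. (\<Sum>i<N. c i * F j i) = 0)"
proof -
  define A where "A = mat\<^sub>r N N (\<lambda>j. if j = k then 0\<^sub>v N else vec N (F j))"
  have A: "A \<in> carrier_mat N N" by (simp add: A_def)
  have "det A = 0" unfolding A_def by (rule det_row_0) (use assms in auto)
  then obtain v where v: "v \<in> carrier_vec N" "v \<noteq> 0\<^sub>v N" "A *\<^sub>v v = 0\<^sub>v N"
    using det_0_iff_vec_prod_zero_field[OF A] by blast
  have "\<exists>i<N. v $ i \<noteq> 0"
    using v(1,2) by (metis carrier_vecD eq_vecI index_zero_vec)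
  moreover have "(\<Sum>i<N. v $ i * F j i) = 0" if "j < k" for j
  proof -
    have "0 = (A *\<^sub>v v) $ j" using v(3) that assms by simp
    also have "\<dots> = (\<Sum>i<N. F j i * v $ i)"
      using that assms v(1) by (simp add: A_def scalar_prod_def lessThan_atLeast0)
    finally show ?thesis by (simp add: mult.commute)
  qed
  ultimately show ?thesis by blast
qed

lemma exists_outside_span:
  fixes G :: "'p \<Rightarrow> nat \<Rightarrow> 'a::field" and ps :: "nat \<Rightarrow> 'p"
  assumes spanning: "\<And>c. (\<forall>p. (\<Sum>i<N. c i * G p i) = 0) \<Longrightarrow> \<forall>i<N. c i = 0"
    and "k < N"
  shows "\<exists>p. \<not> (\<exists>u. \<forall>i<N. G p i = (\<Sum>j<k. G (ps j) i * u j))"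
proof (rule ccontr)
  assume "\<not> ?thesis"
  then have in_span: "\<forall>p. \<exists>u. \<forall>i<N. G p i = (\<Sum>j<k. G (ps j) i * u j)" by blast
  obtain c where c: "\<exists>i<N. c i \<noteq> 0" "\<forall>j<k. (\<Sum>i<N. c i * G (ps j) i) = 0"
    using exists_nonzero_annihilator[OF \<open>k < N\<close>, of "\<lambda>j. G (ps j)"] by blast
  have "(\<Sum>i<N. c i * G p i) = 0" for p
  proof -
    obtain u where u: "\<forall>i<N. G p i = (\<Sum>j<k. G (ps j) i * u j)" using in_span by blast
    have "(\<Sum>i<N. c i * G p i) = (\<Sum>i<N. c i * (\<Sum>j<k. G (ps j) i * u j))"
      using u by (intro sum.cong) auto
    also have "\<dots> = (\<Sum>j<k. u j * (\<Sum>i<N. c i * G (ps j) i))"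
      by (simp add: sum_distrib_left mult_ac sum.swap[of _ "{..<N}"])
    also have "\<dots> = 0" using c(2) by simp
    finally show ?thesis .
  qed
  then show False using spanning c(1) by blast
qed

lemma exists_independent_selection:
  fixes G :: "'p \<Rightarrow> nat \<Rightarrow> 'a::field"
  assumes spanning: "\<And>c. (\<forall>p. (\<Sum>i<N. c i * G p i) = 0) \<Longrightarrow> \<forall>i<N. c i = 0"
    and "m \<le> N"
  shows "\<exists>ps. \<forall>u. (\<forall>i<N. (\<Sum>j<m. G (ps j) i * u j) = 0) \<longrightarrow> (\<forall>j<m. u j = 0)"
  using \<open>m \<le> N\<close>
proof (induction m)
  case 0
  then show ?case by simp
next
  case (Suc k)
  then obtain ps where ps: "\<forall>u. (\<forall>i<N. (\<Sum>j<k. G (ps j) i * u j) = 0) \<longrightarrow> (\<forall>j<k. u j = 0)"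
    by auto
  obtain p where p: "\<not> (\<exists>u. \<forall>i<N. G p i = (\<Sum>j<k. G (ps j) i * u j))"
    using exists_outside_span[OF spanning] Suc.prems by fastforce
  show ?case
  proof (rule exI[of _ "ps(k := p)"], rule allI, rule impI)
    fix u assume "\<forall>i<N. (\<Sum>j<Suc k. G ((ps(k := p)) j) i * u j) = 0"
    then have u: "(\<Sum>j<k. G (ps j) i * u j) + G p i * u k = 0" if "i < N" for i
      using that by simp
    have "u k = 0"
    proof (rule ccontr)
      assume "u k \<noteq> 0"
      have "G p i = (\<Sum>j<k. G (ps j) i * (- u j / u k))" if "i < N" for i
      proof -
        have "(\<Sum>j<k. G (ps j) i * (- u j / u k)) = - (\<Sum>j<k. G (ps j) i * u j) / u k"
          by (simp add: sum_divide_distrib sum_negf)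
        also have "\<dots> = G p i"
        proof -
          have "(\<Sum>j<k. G (ps j) i * u j) = - (G p i * u k)"
            using u[OF that] by (simp add: eq_neg_iff_add_eq_0)
          then show ?thesis using \<open>u k \<noteq> 0\<close> by simp
        qed
        finally show ?thesis by simp
      qed
      then show False using p[unfolded not_ex, rule_format, of "\<lambda>j. - u j / u k"] by blast
    qed
    then have "\<forall>i<N. (\<Sum>j<k. G (ps j) i * u j) = 0" using u by simp
    then have "\<forall>j<k. u j = 0" using ps by blast
    then show "\<forall>j<Suc k. u j = 0" using \<open>u k = 0\<close> less_Suc_eq by auto
  qed
qed

lemma (in vec_space) rank_eq_dim_col_if_trivial_kernel:
  assumes A: "A \<in> carrier_mat n nc"
    and kernel: "\<And>v. v \<in> carrier_vec nc \<Longrightarrow> A *\<^sub>v v = 0\<^sub>v n \<Longrightarrow> v = 0\<^sub>v nc"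
  shows "rank A = nc"
proof -
  have "distinct (cols A)"
  proof (rule ccontr)
    assume "\<not> distinct (cols A)"
    then obtain i j where "i \<noteq> j" "i < nc" "j < nc" and same_col: "col A i = col A j"
      using A by (auto simp: distinct_conv_nth)
    define v :: "'a vec" where "v = vec nc (\<lambda>l. (if l = i then 1 else 0) - (if l = j then 1 else 0))"
    have "A *\<^sub>v v = 0\<^sub>v n"
    proof (rule eq_vecI)
      fix r assume "r < dim_vec (0\<^sub>v n)"
      then have "r < n" by simp
      then have "(A *\<^sub>v v) $ r =
          (\<Sum>l<nc. (if l = i then A $$ (r, l) else 0) - (if l = j then A $$ (r, l) else 0))"
        using A by (auto simp: v_def scalar_prod_def lessThan_atLeast0 intro!: sum.cong)
      also have "\<dots> = A $$ (r, i) - A $$ (r, j)"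
        using \<open>i < nc\<close> \<open>j < nc\<close> by (simp add: sum_subtractf)
      also have "\<dots> = 0"
        using arg_cong[OF same_col, of "\<lambda>w. w $ r"] \<open>r < n\<close> \<open>i < nc\<close> \<open>j < nc\<close> A by simp
      finally show "(A *\<^sub>v v) $ r = 0\<^sub>v n $ r" using \<open>r < n\<close> by simp
    qed (use A in simp)
    then have "v = 0\<^sub>v nc" by (intro kernel) (simp add: v_def)
    moreover have "v $ i = 1" using \<open>i \<noteq> j\<close> \<open>i < nc\<close> by (simp add: v_def)
    ultimately show False using \<open>i < nc\<close> by simp
  qed
  moreover have "lin_indpt (set (cols A))"
  proof
    assume "lin_dep (set (cols A))"
    then obtain v where "v \<in> carrier_vec nc" "v \<noteq> 0\<^sub>v nc" "A *\<^sub>v v = 0\<^sub>v n"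
      using lin_depE[OF A _ \<open>distinct (cols A)\<close>] by blast
    then show False using kernel by blast
  qed
  ultimately show ?thesis using lin_indpt_full_rank[OF A] by blast
qed

lemma exists_full_rank_selection:
  fixes G :: "'p \<Rightarrow> nat \<Rightarrow> 'a::field"
  assumes spanning: "\<And>c. (\<forall>p. (\<Sum>i<N. c i * G p i) = 0) \<Longrightarrow> \<forall>i<N. c i = 0"
    and "m \<le> N"
  shows "\<exists>ps. vec_space.rank N (mat N m (\<lambda>(i, j). G (ps j) i)) = m"
proof -
  obtain ps where ps: "\<forall>u. (\<forall>i<N. (\<Sum>j<m. G (ps j) i * u j) = 0) \<longrightarrow> (\<forall>j<m. u j = 0)"
    using exists_independent_selection[OF spanning \<open>m \<le> N\<close>] by blast
  let ?A = "mat N m (\<lambda>(i, j). G (ps j) i)"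
  have "vec_space.rank N ?A = m"
  proof (rule vec_space.rank_eq_dim_col_if_trivial_kernel)
    fix v :: "'a vec" assume v: "v \<in> carrier_vec m" "?A *\<^sub>v v = 0\<^sub>v N"
    have "(\<Sum>j<m. G (ps j) i * v $ j) = 0" if "i < N" for i
    proof -
      have "(\<Sum>j<m. G (ps j) i * v $ j) = (?A *\<^sub>v v) $ i"
        using v(1) that by (simp add: scalar_prod_def lessThan_atLeast0)
      then show ?thesis using v(2) that by simp
    qed
    then have "\<forall>j<m. v $ j = 0" using ps[rule_format, of "\<lambda>j. v $ j"] by blast
    then show "v = 0\<^sub>v m" using v(1) by (intro eq_vecI) auto
  qed simp
  then show ?thesis by blast
qed

section \<open>Layers with non-polynomial activation\<close>

lemma exists_injective_power_projection:
  fixes X :: "'a::{idom, ring_char_0} mat"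
  assumes X: "X \<in> carrier_mat N d" and distinct: "distinct (rows X)"
  shows "\<exists>s. inj_on (\<lambda>i. \<Sum>k<d. X $$ (i, k) * s ^ k) {..<N}"
proof -
  define P where "P i = (\<Sum>k<d. monom (X $$ (i, k)) k)" for i
  have poly_P: "poly (P i) s = (\<Sum>k<d. X $$ (i, k) * s ^ k)" for i s
    by (simp add: P_def poly_sum poly_monom)
  have "P i \<noteq> P j" if "i < N" "j < N" "i \<noteq> j" for i j
  proof
    assume "P i = P j"
    have "X $$ (i, k) = X $$ (j, k)" if "k < d" for k
      using arg_cong[OF \<open>P i = P j\<close>, of "\<lambda>p. coeff p k"] that
      by (simp add: P_def coeff_sum coeff_monom)
    then have "row X i = row X j"
      using X that by (intro eq_vecI) auto
    then show False using distinct X that by (simp add: distinct_conv_nth)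
  qed
  then have "finite (\<Union>i<N. \<Union>j\<in>{..<N}-{i}. {s. poly (P i - P j) s = 0})"
    by (intro finite_UN_I poly_roots_finite) auto
  then obtain s where s: "s \<notin> (\<Union>i<N. \<Union>j\<in>{..<N}-{i}. {s. poly (P i - P j) s = 0})"
    using ex_new_if_finite[OF infinite_UNIV_char_0] by blast
  show ?thesis
  proof (intro exI[of _ s] inj_onI)
    fix i j assume "i \<in> {..<N}" "j \<in> {..<N}"
      and "(\<Sum>k<d. X $$ (i, k) * s ^ k) = (\<Sum>k<d. X $$ (j, k) * s ^ k)"
    then show "i = j" using s by (auto simp: poly_P)
  qed
qed

lemma layer_index:
  assumes "X \<in> carrier_mat N d" and "W \<in> carrier_mat d m" and "i < N" and "j < m"
  shows "layer g X W b $$ (i, j) = g ((\<Sum>k<d. X $$ (i, k) * W $$ (k, j)) + b $ j)"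
  using assms by (simp add: layer_def pre_act_def scalar_prod_def lessThan_atLeast0)

lemma layer_full_rank_if_not_poly:
  fixes g :: "real \<Rightarrow> real" and X :: "real mat"
  assumes X: "X \<in> carrier_mat N d" and distinct: "distinct (rows X)"
    and smooth: "smooth_at g z" and not_poly: "\<nexists>q. g = poly q" and "m \<le> N"
  shows "\<exists>W b. W \<in> carrier_mat d m \<and> b \<in> carrier_vec m \<and> vec_space.rank N (layer g X W b) = m"
proof -
  obtain s where inj: "inj_on (\<lambda>i. \<Sum>k<d. X $$ (i, k) * s ^ k) {..<N}"
    using exists_injective_power_projection[OF X distinct] by blast
  define t where "t i = (\<Sum>k<d. X $$ (i, k) * s ^ k)" for i
  define G where "G p i = g (fst p * t i + snd p)" for p :: "real \<times> real" and i
  have "\<forall>i<N. c i = 0" if "\<forall>p. (\<Sum>i<N. c i * G p i) = 0" for c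
  proof (rule ccontr)
    assume "\<not> (\<forall>i<N. c i = 0)"
    moreover have "(\<Sum>i<N. c i * g (a * t i + b)) = 0" for a b
      using that[rule_format, of "(a, b)"] by (simp add: G_def)
    ultimately show False
      using poly_if_ridge_annihilated[OF smooth inj[folded t_def]] not_poly by blast
  qed
  then obtain ps where rank: "vec_space.rank N (mat N m (\<lambda>(i, j). G (ps j) i)) = m"
    using exists_full_rank_selection[where G = G] \<open>m \<le> N\<close> by blast
  define W where "W = mat d m (\<lambda>(k, j). fst (ps j) * s ^ k)"
  define b where "b = vec m (\<lambda>j. snd (ps j))"
  have W: "W \<in> carrier_mat d m" by (simp add: W_def)
  have "layer g X W b = mat N m (\<lambda>(i, j). G (ps j) i)"
  proof (rule eq_matI)
    fix i j assume "i < dim_row (mat N m (\<lambda>(i, j). G (ps j) i))" "j < dim_col (mat N m (\<lambda>(i, j). G (ps j) i))"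
    then have "i < N" "j < m" by auto
    then have "layer g X W b $$ (i, j) = g ((\<Sum>k<d. X $$ (i, k) * W $$ (k, j)) + b $ j)"
      by (rule layer_index[OF X W])
    then show "layer g X W b $$ (i, j) = mat N m (\<lambda>(i, j). G (ps j) i) $$ (i, j)"
      using \<open>i < N\<close> \<open>j < m\<close> by (simp add: G_def t_def W_def b_def sum_distrib_left mult_ac)
  qed (use X in \<open>auto simp: layer_def pre_act_def W_def\<close>)
  moreover have "b \<in> carrier_vec m" by (simp add: b_def)
  ultimately show ?thesis using W rank by metis
qed

lemma smooth_at_relu: "smooth_at relu 1"
  by (rule smooth_at_if_poly_near[where e = 1 and q = "[:0, 1:]"]) (auto simp: relu_def)

lemma relu_not_poly: "\<nexists>q. relu = poly q"
proof
  assume "\<exists>q. relu = poly q"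
  then obtain q where q: "relu = poly q" by blast
  have "q = 0"
    by (rule poly_eq_0_if_vanishes_on_interval[of "-1" 0]) (auto simp: q[symmetric] relu_def)
  then show False using fun_cong[OF q, of 1] by (simp add: relu_def)
qed

section \<open>Layers with polynomial activation\<close>

inductive_set fun_span :: "(nat \<Rightarrow> 'a::field) set \<Rightarrow> (nat \<Rightarrow> 'a) set" for S where
  base: "f \<in> S \<Longrightarrow> f \<in> fun_span S"
| zero: "(\<lambda>i. 0) \<in> fun_span S"
| add: "f \<in> fun_span S \<Longrightarrow> h \<in> fun_span S \<Longrightarrow> (\<lambda>i. f i + h i) \<in> fun_span S"
| smult: "f \<in> fun_span S \<Longrightarrow> (\<lambda>i. c * f i) \<in> fun_span S"

lemma fun_span_sum:
  assumes "finite A" and "\<And>x. x \<in> A \<Longrightarrow> F x \<in> fun_span S"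
  shows "(\<lambda>i. \<Sum>x\<in>A. F x i) \<in> fun_span S"
  using assms
proof (induction A rule: finite_induct)
  case empty
  then show ?case by (simp add: fun_span.zero)
next
  case (insert a A)
  then have "(\<lambda>i. F a i + (\<Sum>x\<in>A. F x i)) \<in> fun_span S"
    by (intro fun_span.add) auto
  then show ?case using insert by simp
qed

lemma (in vec_space) vec_in_span_if_fun_span:
  assumes "f \<in> fun_span S"
  shows "vec n f \<in> span ((\<lambda>h. vec n h) ` S)"
proof -
  have V: "(\<lambda>h. vec n h) ` S \<subseteq> carrier_vec n" by auto
  from assms show ?thesis
  proof (induction rule: fun_span.induct)
    case zero
    have "vec n (\<lambda>i. 0) = (0\<^sub>v n :: 'a vec)" by auto
    then show ?case using submodule.zero_closed[OF span_is_submodule[OF V]] by simp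
  next
    case (add f h)
    have "vec n (\<lambda>i. f i + h i) = vec n f + vec n h" by auto
    then show ?case using span_add1[OF V add.IH] by simp
  next
    case (smult f c)
    have "vec n (\<lambda>i. c * f i) = c \<cdot>\<^sub>v vec n f" by auto
    then show ?case using submodule.smult_closed[OF span_is_submodule[OF V]] smult.IH by simp
  qed (auto intro: span_mem)
qed

lemma (in vec_space) dim_span_le_card:
  assumes S: "finite S" "S \<subseteq> carrier_vec n"
  shows "vectorspace.dim class_ring (span_vs S) \<le> card S"
proof -
  have vs: "vectorspace class_ring (span_vs S)"
    using S span_is_subspace subspace_def subspace_is_vs by simp
  have "S \<subseteq> span S" using S in_own_span by simp
  moreover have "LinearCombinations.module.span class_ring (span_vs S) S = carrier (span_vs S)"
    using span_li_not_depend(1)[OF \<open>S \<subseteq> span S\<close> span_is_submodule[OF S(2)]] by auto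
  ultimately show ?thesis using vectorspace.gen_ge_dim[OF vs S(1)] by simp
qed

lemma (in vec_space) rank_le_card_if_cols_in_span:
  assumes A: "A \<in> carrier_mat n nc" and S: "finite S" "S \<subseteq> carrier_vec n"
    and cols: "set (cols A) \<subseteq> span S"
  shows "rank A \<le> card S"
proof -
  have vs: "vectorspace class_ring (span_vs S)"
    using S span_is_subspace subspace_is_vs by simp
  have "subspace class_ring (span (set (cols A))) (span_vs S)"
    using vectorspace.span_is_subspace[OF vs, of "set (cols A)",
        unfolded span_li_not_depend(1)[OF cols span_is_submodule[OF S(2)]]] cols
    by auto
  moreover have "vectorspace.fin_dim class_ring (span_vs S)"
    "vectorspace.fin_dim class_ring (span_vs S\<lparr>carrier := span (set (cols A))\<rparr>)"
    using fin_dim_span fin_dim_span_cols A S by auto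
  ultimately have "rank A \<le> vectorspace.dim class_ring (span_vs S)"
    unfolding rank_def using vectorspace.subspace_dim[OF vs] by simp
  also have "\<dots> \<le> card S" by (rule dim_span_le_card[OF S])
  finally show ?thesis .
qed

lemma (in vec_space) rank_le_card_if_cols_in_fun_span:
  assumes A: "A \<in> carrier_mat n nc" and "finite S"
    and cols: "\<And>j. j < nc \<Longrightarrow> \<exists>f\<in>fun_span S. \<forall>i<n. A $$ (i, j) = f i"
  shows "rank A \<le> card S"
proof -
  let ?V = "(\<lambda>h. vec n h) ` S"
  have "set (cols A) \<subseteq> span ?V"
  proof
    fix v assume "v \<in> set (cols A)"
    then obtain j where "j < nc" "v = col A j" using A by (auto simp: cols_def)
    moreover obtain f where "f \<in> fun_span S" "\<forall>i<n. A $$ (i, j) = f i" using cols \<open>j < nc\<close> by blast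
    ultimately have "v = vec n f" using A by auto
    then show "v \<in> span ?V" using vec_in_span_if_fun_span[OF \<open>f \<in> fun_span S\<close>] by simp
  qed
  then have "rank A \<le> card ?V" using \<open>finite S\<close> by (intro rank_le_card_if_cols_in_span[OF A]) auto
  also have "\<dots> \<le> card S" using \<open>finite S\<close> by (rule card_image_le)
  finally show ?thesis .
qed

(* Index d stands for the constant coordinate 1, so the multisets of size p over {0..d} index
   the monomials of degree at most p in the entries of row i. *)
definition row_monomial :: "'a::comm_ring_1 mat \<Rightarrow> nat \<Rightarrow> nat multiset \<Rightarrow> nat \<Rightarrow> 'a" where
  "row_monomial X d M i = (\<Prod>k\<in>#M. if k < d then X $$ (i, k) else 1)"

lemma ridge_power_monomial_in_fun_span:
  fixes X :: "'a::field mat"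
  assumes "set_mset M \<subseteq> {0..d}" and "size M + r \<le> p"
  shows "(\<lambda>i. ((\<Sum>k<d. X $$ (i, k) * w k) + \<beta>) ^ r * row_monomial X d M i)
    \<in> fun_span (row_monomial X d ` multisets_of_size {0..d} p)"
  using assms
proof (induction r arbitrary: M)
  case 0
  let ?M = "M + replicate_mset (p - size M) d"
  have "?M \<in> multisets_of_size {0..d} p" using 0 by (auto simp: multisets_of_size_def)
  moreover have "row_monomial X d ?M = row_monomial X d M"
    by (simp add: row_monomial_def fun_eq_iff)
  ultimately have "row_monomial X d M \<in> row_monomial X d ` multisets_of_size {0..d} p"
    by (metis image_eqI)
  then show ?case by (simp add: fun_span.base)
next
  case (Suc r)
  let ?y = "\<lambda>i. (\<Sum>k<d. X $$ (i, k) * w k) + \<beta>"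
  let ?S = "fun_span (row_monomial X d ` multisets_of_size {0..d} p)"
  have IH: "(\<lambda>i. ?y i ^ r * row_monomial X d (add_mset k M) i) \<in> ?S" if "k \<le> d" for k
    using Suc that by auto
  have "(\<lambda>i. \<Sum>k<d. w k * (?y i ^ r * row_monomial X d (add_mset k M) i)) \<in> ?S"
    using IH by (intro fun_span_sum fun_span.smult) auto
  moreover have "(\<lambda>i. \<beta> * (?y i ^ r * row_monomial X d (add_mset d M) i)) \<in> ?S"
    using IH by (intro fun_span.smult) auto
  ultimately have "(\<lambda>i. (\<Sum>k<d. w k * (?y i ^ r * row_monomial X d (add_mset k M) i)) +
      \<beta> * (?y i ^ r * row_monomial X d (add_mset d M) i)) \<in> ?S"
    by (rule fun_span.add)
  moreover have "(\<Sum>k<d. w k * (?y i ^ r * row_monomial X d (add_mset k M) i)) +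
      \<beta> * (?y i ^ r * row_monomial X d (add_mset d M) i) = ?y i ^ Suc r * row_monomial X d M i" for i
  proof -
    have "(\<Sum>k<d. w k * (?y i ^ r * row_monomial X d (add_mset k M) i)) =
        (\<Sum>k<d. X $$ (i, k) * w k) * (?y i ^ r * row_monomial X d M i)"
      unfolding sum_distrib_right by (intro sum.cong refl) (simp add: row_monomial_def)
    then show ?thesis by (simp add: row_monomial_def algebra_simps)
  qed
  ultimately show ?case by simp
qed

lemma poly_ridge_in_fun_span:
  fixes X :: "'a::field mat"
  shows "(\<lambda>i. poly q ((\<Sum>k<d. X $$ (i, k) * w k) + \<beta>))
    \<in> fun_span (row_monomial X d ` multisets_of_size {0..d} (degree q))"
proof -
  have "(\<lambda>i. poly q ((\<Sum>k<d. X $$ (i, k) * w k) + \<beta>)) =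
      (\<lambda>i. \<Sum>r\<le>degree q. coeff q r * (((\<Sum>k<d. X $$ (i, k) * w k) + \<beta>) ^ r * row_monomial X d {#} i))"
    by (simp add: poly_altdef row_monomial_def)
  also have "\<dots> \<in> fun_span (row_monomial X d ` multisets_of_size {0..d} (degree q))"
    by (intro fun_span_sum fun_span.smult ridge_power_monomial_in_fun_span) auto
  finally show ?thesis .
qed

lemma rank_layer_poly_le:
  assumes X: "X \<in> carrier_mat N d" and W: "W \<in> carrier_mat d m"
  shows "vec_space.rank N (layer (poly q) X W b) \<le> (degree q + d) choose degree q"
proof -
  let ?Ms = "multisets_of_size {0..d} (degree q)"
  have "layer (poly q) X W b \<in> carrier_mat N m" using X W by (simp add: layer_def pre_act_def)
  then have "vec_space.rank N (layer (poly q) X W b) \<le> card (row_monomial X d ` ?Ms)"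
  proof (rule vec_space.rank_le_card_if_cols_in_fun_span)
    show "finite (row_monomial X d ` ?Ms)" by (simp add: finite_multisets_of_size)
    fix j assume "j < m"
    then show "\<exists>f\<in>fun_span (row_monomial X d ` ?Ms). \<forall>i<N. layer (poly q) X W b $$ (i, j) = f i"
      using layer_index[OF X W]
      by (intro bexI[OF _ poly_ridge_in_fun_span[where w = "\<lambda>k. W $$ (k, j)" and \<beta> = "b $ j"]]) simp
  qed
  also have "\<dots> \<le> card ?Ms" by (simp add: card_image_le finite_multisets_of_size)
  also have "\<dots> = (degree q + d) choose degree q"
    by (simp add: card_multisets_of_size add.commute)
  finally show ?thesis .
qed

theorem theorem1:
  fixes g :: "real \<Rightarrow> real" and X :: "real mat" and N d :: nat
  assumes X: "X \<in> carrier_mat N d"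
    and distinct_rows: "distinct (rows X)"
  shows
   "((\<exists>I. open_interval I \<and> \<not> polynomial_on g I \<and> (\<exists>x0\<in>I. smooth_at g x0)) \<longrightarrow>
       (\<forall>m. d < m \<and> m \<le> N \<longrightarrow>
          (\<exists>W b. W \<in> carrier_mat d m \<and> b \<in> carrier_vec m \<and>
                 vec_space.rank N (layer g X W b) = m)))
    \<and> (\<forall>m. d < m \<and> m \<le> N \<longrightarrow>
          (\<exists>W b. W \<in> carrier_mat d m \<and> b \<in> carrier_vec m \<and>
                 vec_space.rank N (layer relu X W b) = m))
    \<and> (\<forall>(q :: real poly) p. g = poly q \<and> degree q = p \<longrightarrow>
          (\<forall>m W b. W \<in> carrier_mat d m \<and> b \<in> carrier_vec m \<longrightarrow>
                 vec_space.rank N (layer g X W b) \<le> (p + d) choose p))"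
proof (intro conjI allI impI)
  fix m assume "\<exists>I. open_interval I \<and> \<not> polynomial_on g I \<and> (\<exists>x0\<in>I. smooth_at g x0)"
    and m: "d < m \<and> m \<le> N"
  then obtain I x0 where "\<not> polynomial_on g I" and "smooth_at g x0" by blast
  then have "\<nexists>q. g = poly q" by (auto simp: polynomial_on_def)
  then show "\<exists>W b. W \<in> carrier_mat d m \<and> b \<in> carrier_vec m \<and> vec_space.rank N (layer g X W b) = m"
    using layer_full_rank_if_not_poly[OF X distinct_rows \<open>smooth_at g x0\<close>] m by blast
next
  fix m assume "d < m \<and> m \<le> N"
  then show "\<exists>W b. W \<in> carrier_mat d m \<and> b \<in> carrier_vec m \<and> vec_space.rank N (layer relu X W b) = m"
    using layer_full_rank_if_not_poly[OF X distinct_rows smooth_at_relu relu_not_poly] by blast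
next
  fix q :: "real poly" and p m and W :: "real mat" and b :: "real vec"
  assume "g = poly q \<and> degree q = p" and "W \<in> carrier_mat d m \<and> b \<in> carrier_vec m"
  then show "vec_space.rank N (layer g X W b) \<le> (p + d) choose p"
    using rank_layer_poly_le[OF X] by blast
qed

end
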